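(* Let $(X_k;\leq_k)_{k\in K}$ be a family of pairwise disjoint nonempty posets, and let $X=\bigcup_{k\in K}X_k$ with order $\leq=\bigcup_{k\in K}\leq_k$ (disjoint union of posets). Then the following are equivalent: (i) for each $k\in K$, the space $(X_k;\tau_i(X_k))$ is compact; (ii) $(X;\tau_i(X))$ is compact.
   Context: For a poset $X$ and $x\in X$, $(x]=\{z: z\le x\}$, $[x)=\{z: z\ge x\}$. The interval topology $\tau_i(X)$ on a poset $X$ is the topology with subbase $\{X\setminus (x]: x\in X\}\cup\{X\setminus [x): x\in X\}$. *)

theory Defs
  imports "HOL-Analysis.Analysis"
begin

definition poset_on :: "'a set \<Rightarrow> ('a \<Rightarrow> 'a \<Rightarrow> bool) \<Rightarrow> bool" where
  "poset_on S le \<longleftrightarrow>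
     (\<forall>x\<in>S. le x x) \<and>
     (\<forall>x\<in>S. \<forall>y\<in>S. le x y \<and> le y x \<longrightarrow> x = y) \<and>
     (\<forall>x\<in>S. \<forall>y\<in>S. \<forall>z\<in>S. le x y \<and> le y z \<longrightarrow> le x z)"

definition down_set :: "'a set \<Rightarrow> ('a \<Rightarrow> 'a \<Rightarrow> bool) \<Rightarrow> 'a \<Rightarrow> 'a set" where
  "down_set S le x = {z \<in> S. le z x}"

definition up_set :: "'a set \<Rightarrow> ('a \<Rightarrow> 'a \<Rightarrow> bool) \<Rightarrow> 'a \<Rightarrow> 'a set" where
  "up_set S le x = {z \<in> S. le x z}"

text \<open>The whole carrier S is added to the subbase so that the
topological space is exactly S (empty finite intersection convention).\<close>

definition interval_topology :: "'a set \<Rightarrow> ('a \<Rightarrow> 'a \<Rightarrow> bool) \<Rightarrow> 'a topology" where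
  "interval_topology S le = topology_generated_by
     (insert S ((\<lambda>x. S - down_set S le x) ` S \<union> (\<lambda>x. S - up_set S le x) ` S))"

end

theory Submission
  imports Defs
begin

(* Write X for the disjoint union of the posets X_k (k in K).  Two elements of
   different components are incomparable, so the principal down- and up-sets of
   X are those of the components.  Consequently:
   (a) a subbasic open set of X_k, enlarged by X - X_k, is subbasic in X; hence
       every nonempty open V of X_k gives an open set V \<union> (X - X_k) of X;
   (b) a subbasic open set of X meets X_k in a subbasic set of X_k, so the
       inclusion X_k \<rightarrow> X is continuous and every compact X_k is compact in X;
   (c) a subbasic open set of X contains all but at most one component, hence
       every nonempty open set of X contains all but finitely many components. *)

section \<open>Generated topologies\<close>

text \<open>If every generating set of \<open>S\<close>, enlarged by \<open>R\<close>, is open for \<open>B\<close>, then so is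
  every nonempty open set of \<open>S\<close> enlarged by \<open>R\<close>.  (The empty set must be excluded,
  since \<open>R\<close> itself need not be open.)\<close>

lemma generate_topology_on_enlarge:
  assumes subbase: "\<And>s. s \<in> S \<Longrightarrow> generate_topology_on B (s \<union> R)"
    and "generate_topology_on S V"
  shows "V = {} \<or> generate_topology_on B (V \<union> R)"
  using \<open>generate_topology_on S V\<close>
proof induction
  case Empty
  then show ?case by simp
next
  case (Int a b)
  show ?case
  proof (cases "a = {} \<or> b = {}")
    case False
    with Int have "generate_topology_on B ((a \<union> R) \<inter> (b \<union> R))"
      by (auto intro: generate_topology_on.Int)
    moreover have "(a \<union> R) \<inter> (b \<union> R) = (a \<inter> b) \<union> R" by auto
    ultimately show ?thesis by simp
  qed auto
next
  case (UN \<V>)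
  show ?case
  proof (cases "\<forall>v\<in>\<V>. v = {}")
    case False
    let ?\<W> = "(\<lambda>v. v \<union> R) ` {v \<in> \<V>. v \<noteq> {}}"
    have "\<forall>W \<in> ?\<W>. generate_topology_on B W" using UN by auto
    then have "generate_topology_on B (\<Union>?\<W>)"
      by (intro generate_topology_on.UN) blast
    moreover have "\<Union>?\<W> = \<Union>\<V> \<union> R" using False by auto
    ultimately show ?thesis by simp
  next
    case True
    then show ?thesis by auto
  qed
next
  case (Basis s)
  then show ?case using subbase by simp
qed

lemma generate_topology_on_eventually_contains:
  assumes subbase: "\<And>s. s \<in> B \<Longrightarrow> eventually (\<lambda>i. A i \<subseteq> s) F"
    and "generate_topology_on B U" and "U \<noteq> {}"
  shows "eventually (\<lambda>i. A i \<subseteq> U) F"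
  using assms(2,3)
proof induction
  case (Int a b)
  then have "a \<noteq> {}" "b \<noteq> {}" by auto
  with Int have "eventually (\<lambda>i. A i \<subseteq> a \<and> A i \<subseteq> b) F"
    by (intro eventually_conj) auto
  then show ?case by (rule eventually_mono) auto
next
  case (UN \<V>)
  then obtain v where "v \<in> \<V>" "v \<noteq> {}" by auto
  with UN have "eventually (\<lambda>i. A i \<subseteq> v) F" by blast
  then show ?case by (rule eventually_mono) (use \<open>v \<in> \<V>\<close> in auto)
qed (use subbase in auto)

text \<open>A space covered by compact pieces \<open>A i\<close> is compact as soon as every nonempty
  open set contains all but finitely many pieces: one such open set together with
  the finitely many remaining (compact) pieces covers the space.\<close>

lemma compact_space_cofinitely_absorbing_cover:
  assumes cover: "topspace T = (\<Union>i\<in>K. A i)"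
    and compact: "\<And>i. i \<in> K \<Longrightarrow> compactin T (A i)"
    and absorb: "\<And>U. openin T U \<Longrightarrow> U \<noteq> {} \<Longrightarrow> finite {i \<in> K. \<not> A i \<subseteq> U}"
  shows "compact_space T"
  unfolding compact_space_alt
proof (intro allI impI)
  fix \<U> assume \<U>: "(\<forall>U\<in>\<U>. openin T U) \<and> topspace T \<subseteq> \<Union>\<U>"
  show "\<exists>\<F>. finite \<F> \<and> \<F> \<subseteq> \<U> \<and> topspace T \<subseteq> \<Union>\<F>"
  proof (cases "topspace T = {}")
    case True
    then show ?thesis by blast
  next
    case False
    with \<U> obtain U where U: "U \<in> \<U>" "U \<noteq> {}" by blast
    define J where "J = {i \<in> K. \<not> A i \<subseteq> U}"
    have "finite J" unfolding J_def using absorb U \<U> by blast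
    then have "compactin T (\<Union>(A ` J))"
      by (intro compactin_Union) (auto simp: J_def compact)
    moreover have "\<Union>(A ` J) \<subseteq> \<Union>\<U>" using \<U> cover J_def by auto
    ultimately obtain \<G> where \<G>: "finite \<G>" "\<G> \<subseteq> \<U>" "\<Union>(A ` J) \<subseteq> \<Union>\<G>"
      using \<U> unfolding compactin_def by meson
    have "topspace T \<subseteq> U \<union> \<Union>(A ` J)" using cover J_def by auto
    then have "topspace T \<subseteq> \<Union>(insert U \<G>)" using \<G>(3) by blast
    with \<G> U show ?thesis by (intro exI[of _ "insert U \<G>"]) auto
  qed
qed

lemma compact_space_of_enlarged_opens:
  assumes "compact_space X" and "topspace T \<subseteq> topspace X"
    and enlarge: "\<And>V. openin T V \<Longrightarrow> V \<noteq> {} \<Longrightarrow> openin X (V \<union> (topspace X - topspace T))"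
  shows "compact_space T"
  unfolding compact_space_alt
proof (intro allI impI)
  fix \<U> assume \<U>: "(\<forall>U\<in>\<U>. openin T U) \<and> topspace T \<subseteq> \<Union>\<U>"
  show "\<exists>\<F>. finite \<F> \<and> \<F> \<subseteq> \<U> \<and> topspace T \<subseteq> \<Union>\<F>"
  proof (cases "topspace T = {}")
    case True
    then show ?thesis by blast
  next
    case False
    define \<U>' where "\<U>' = {U \<in> \<U>. U \<noteq> {}}"
    define enlarged where "enlarged U = U \<union> (topspace X - topspace T)" for U
    have "\<U>' \<noteq> {}" using False \<U> unfolding \<U>'_def by blast
    then have "topspace X \<subseteq> \<Union>(enlarged ` \<U>')"
      using \<U> unfolding \<U>'_def enlarged_def by auto
    moreover have "\<forall>W \<in> enlarged ` \<U>'. openin X W"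
      using \<U> enlarge unfolding \<U>'_def enlarged_def by auto
    ultimately obtain \<G> where \<G>: "finite \<G>" "\<G> \<subseteq> enlarged ` \<U>'" "topspace X \<subseteq> \<Union>\<G>"
      using \<open>compact_space X\<close> unfolding compact_space_alt by meson
    then obtain \<F> where \<F>: "finite \<F>" "\<F> \<subseteq> \<U>'" "\<G> = enlarged ` \<F>"
      by (meson finite_subset_image)
    have "topspace T \<subseteq> \<Union>\<F>"
    proof
      fix x assume x: "x \<in> topspace T"
      then obtain U where "U \<in> \<F>" "x \<in> enlarged U"
        using \<G>(3) \<F>(3) \<open>topspace T \<subseteq> topspace X\<close> by blast
      with x show "x \<in> \<Union>\<F>" unfolding enlarged_def by blast
    qed
    with \<F> show ?thesis unfolding \<U>'_def by blast
  qed
qed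

section \<open>The disjoint union of a family of posets\<close>

definition interval_subbase :: "'a set \<Rightarrow> ('a \<Rightarrow> 'a \<Rightarrow> bool) \<Rightarrow> 'a set set" where
  "interval_subbase S le =
     insert S ((\<lambda>x. S - down_set S le x) ` S \<union> (\<lambda>x. S - up_set S le x) ` S)"

lemma interval_topology_subbase:
  "interval_topology S le = topology_generated_by (interval_subbase S le)"
  unfolding interval_topology_def interval_subbase_def ..

lemma topspace_interval_topology [simp]: "topspace (interval_topology S le) = S"
  unfolding interval_topology_subbase interval_subbase_def by auto

locale disjoint_family =
  fixes K :: "'k set" and Xk :: "'k \<Rightarrow> 'a set" and lek :: "'k \<Rightarrow> 'a \<Rightarrow> 'a \<Rightarrow> bool"
  assumes disjoint: "\<And>k l. k \<in> K \<Longrightarrow> l \<in> K \<Longrightarrow> k \<noteq> l \<Longrightarrow> Xk k \<inter> Xk l = {}"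
begin

definition union_set :: "'a set" where
  "union_set = (\<Union>k\<in>K. Xk k)"

definition union_le :: "'a \<Rightarrow> 'a \<Rightarrow> bool" where
  "union_le x y \<longleftrightarrow> (\<exists>k\<in>K. x \<in> Xk k \<and> y \<in> Xk k \<and> lek k x y)"

lemma component_unique: "k \<in> K \<Longrightarrow> l \<in> K \<Longrightarrow> x \<in> Xk k \<Longrightarrow> x \<in> Xk l \<Longrightarrow> k = l"
  using disjoint by blast

lemma component_subset: "k \<in> K \<Longrightarrow> Xk k \<subseteq> union_set"
  unfolding union_set_def by auto

lemma down_set_union:
  assumes "k \<in> K" "x \<in> Xk k"
  shows "down_set union_set union_le x = down_set (Xk k) (lek k) x"
  using assms component_unique unfolding down_set_def union_le_def union_set_def by blast

lemma up_set_union: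
  assumes "k \<in> K" "x \<in> Xk k"
  shows "up_set union_set union_le x = up_set (Xk k) (lek k) x"
  using assms component_unique unfolding up_set_def union_le_def union_set_def by blast

lemma union_subbase_cases:
  assumes "s \<in> interval_subbase union_set union_le"
  obtains "s = union_set"
  | m x where "m \<in> K" "x \<in> Xk m" "s = union_set - down_set (Xk m) (lek m) x"
  | m x where "m \<in> K" "x \<in> Xk m" "s = union_set - up_set (Xk m) (lek m) x"
  using assms down_set_union up_set_union
  unfolding interval_subbase_def union_set_def by auto

lemma subbase_enlarge:
  assumes "k \<in> K" "s \<in> interval_subbase (Xk k) (lek k)"
  shows "s \<union> (union_set - Xk k) \<in> interval_subbase union_set union_le"
proof -
  have sub: "Xk k \<subseteq> union_set" using component_subset[OF \<open>k \<in> K\<close>] .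
  from assms(2) consider "s = Xk k"
    | x where "x \<in> Xk k" "s = Xk k - down_set (Xk k) (lek k) x"
    | x where "x \<in> Xk k" "s = Xk k - up_set (Xk k) (lek k) x"
    unfolding interval_subbase_def by auto
  then show ?thesis
  proof cases
    case 1
    then have "s \<union> (union_set - Xk k) = union_set" using sub by auto
    then show ?thesis by (simp add: interval_subbase_def)
  next
    case (2 x)
    then have "s \<union> (union_set - Xk k) = union_set - down_set union_set union_le x"
      using sub down_set_union[OF \<open>k \<in> K\<close> \<open>x \<in> Xk k\<close>] by (auto simp: down_set_def)
    then show ?thesis using 2 sub by (auto simp: interval_subbase_def)
  next
    case (3 x)
    then have "s \<union> (union_set - Xk k) = union_set - up_set union_set union_le x"
      using sub up_set_union[OF \<open>k \<in> K\<close> \<open>x \<in> Xk k\<close>] by (auto simp: up_set_def)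
    then show ?thesis using 3 sub by (auto simp: interval_subbase_def)
  qed
qed

text \<open>Fact (b): a subbasic set of \<open>X\<close> meets \<open>X\<^sub>k\<close> in a subbasic set of \<open>X\<^sub>k\<close>;
  for a point of another component it contains all of \<open>X\<^sub>k\<close>.\<close>

lemma subbase_restrict:
  assumes "k \<in> K" "s \<in> interval_subbase union_set union_le"
  shows "s \<inter> Xk k \<in> interval_subbase (Xk k) (lek k)"
  using assms(2)
proof (cases rule: union_subbase_cases)
  case 1
  then show ?thesis using component_subset[OF assms(1)]
    by (auto simp: interval_subbase_def Int_absorb1)
next
  case (2 m x)
  have "s \<inter> Xk k = (if m = k then Xk k - down_set (Xk k) (lek k) x else Xk k)"
    using 2 component_subset[OF assms(1)] disjoint[OF assms(1) \<open>m \<in> K\<close>]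
    by (auto simp: down_set_def)
  then show ?thesis using 2 by (cases "m = k") (auto simp: interval_subbase_def)
next
  case (3 m x)
  have "s \<inter> Xk k = (if m = k then Xk k - up_set (Xk k) (lek k) x else Xk k)"
    using 3 component_subset[OF assms(1)] disjoint[OF assms(1) \<open>m \<in> K\<close>]
    by (auto simp: up_set_def)
  then show ?thesis using 3 by (cases "m = k") (auto simp: interval_subbase_def)
qed

text \<open>Fact (c): a subbasic set of \<open>X\<close> contains every component except possibly the
  one of the point defining it.\<close>

lemma subbase_contains_cofinitely:
  assumes "s \<in> interval_subbase union_set union_le"
  shows "eventually (\<lambda>l. Xk l \<subseteq> s) (inf cofinite (principal K))"
  using assms
proof (cases rule: union_subbase_cases)
  case 1
  then show ?thesis using component_subset by (simp add: eventually_inf_principal)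
next
  case (2 m x)
  have "Xk l \<subseteq> s" if "l \<in> K" "l \<noteq> m" for l
    using 2 component_subset[OF that(1)] disjoint[OF that(1) \<open>m \<in> K\<close> that(2)]
    by (auto simp: down_set_def)
  then have "{l. \<not> (l \<in> K \<longrightarrow> Xk l \<subseteq> s)} \<subseteq> {m}" by blast
  then show ?thesis
    unfolding eventually_inf_principal eventually_cofinite by (rule finite_subset) simp
next
  case (3 m x)
  have "Xk l \<subseteq> s" if "l \<in> K" "l \<noteq> m" for l
    using 3 component_subset[OF that(1)] disjoint[OF that(1) \<open>m \<in> K\<close> that(2)]
    by (auto simp: up_set_def)
  then have "{l. \<not> (l \<in> K \<longrightarrow> Xk l \<subseteq> s)} \<subseteq> {m}" by blast
  then show ?thesis
    unfolding eventually_inf_principal eventually_cofinite by (rule finite_subset) simp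
qed

lemma open_enlarge:
  assumes "k \<in> K" "openin (interval_topology (Xk k) (lek k)) V" "V \<noteq> {}"
  shows "openin (interval_topology union_set union_le) (V \<union> (union_set - Xk k))"
  using generate_topology_on_enlarge[of "interval_subbase (Xk k) (lek k)"
      "interval_subbase union_set union_le" "union_set - Xk k" V]
    subbase_enlarge[OF assms(1)] assms(2,3)
  by (auto simp: interval_topology_subbase openin_topology_generated_by_iff
      intro: generate_topology_on.Basis)

lemma continuous_inclusion:
  assumes "k \<in> K"
  shows "continuous_map (interval_topology (Xk k) (lek k)) (interval_topology union_set union_le) id"
  unfolding interval_topology_subbase
proof (rule continuous_on_generated_topo)
  fix s assume "s \<in> interval_subbase union_set union_le"
  then have "id -` s \<inter> Xk k \<in> interval_subbase (Xk k) (lek k)"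
    using subbase_restrict[OF assms] by simp
  then show "openin (topology_generated_by (interval_subbase (Xk k) (lek k)))
      (id -` s \<inter> topspace (topology_generated_by (interval_subbase (Xk k) (lek k))))"
    using topspace_interval_topology[of "Xk k" "lek k"]
    by (simp add: interval_topology_subbase topology_generated_by_Basis)
next
  show "id ` topspace (topology_generated_by (interval_subbase (Xk k) (lek k)))
      \<subseteq> \<Union>(interval_subbase union_set union_le)"
    using topspace_interval_topology[of "Xk k" "lek k"]
      topspace_interval_topology[of union_set union_le] component_subset[OF assms]
    by (simp add: interval_topology_subbase)
qed

lemma open_contains_cofinitely:
  assumes "openin (interval_topology union_set union_le) U" "U \<noteq> {}"
  shows "finite {l \<in> K. \<not> Xk l \<subseteq> U}"
proof -
  have "generate_topology_on (interval_subbase union_set union_le) U"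
    using assms(1) by (simp add: interval_topology_subbase openin_topology_generated_by_iff)
  then have "eventually (\<lambda>l. Xk l \<subseteq> U) (inf cofinite (principal K))"
    using generate_topology_on_eventually_contains[where F = "inf cofinite (principal K)"]
      subbase_contains_cofinitely assms(2) by blast
  then show ?thesis unfolding eventually_inf_principal eventually_cofinite by simp
qed

lemma compact_union_if_compact_components:
  assumes "\<And>k. k \<in> K \<Longrightarrow> compact_space (interval_topology (Xk k) (lek k))"
  shows "compact_space (interval_topology union_set union_le)"
proof (rule compact_space_cofinitely_absorbing_cover[where A = Xk and K = K])
  show "topspace (interval_topology union_set union_le) = (\<Union>k\<in>K. Xk k)"
    by (simp add: union_set_def)
  show "compactin (interval_topology union_set union_le) (Xk k)" if "k \<in> K" for k
    using image_compactin[OF assms[OF that, unfolded compact_space_def]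
        continuous_inclusion[OF that]] by simp
qed (rule open_contains_cofinitely)

lemma compact_component_if_compact_union:
  assumes "compact_space (interval_topology union_set union_le)" "k \<in> K"
  shows "compact_space (interval_topology (Xk k) (lek k))"
proof (rule compact_space_of_enlarged_opens[OF assms(1)])
  show "topspace (interval_topology (Xk k) (lek k)) \<subseteq> topspace (interval_topology union_set union_le)"
    using component_subset[OF assms(2)] by simp
  show "openin (interval_topology union_set union_le) (V \<union>
      (topspace (interval_topology union_set union_le) - topspace (interval_topology (Xk k) (lek k))))"
    if "openin (interval_topology (Xk k) (lek k)) V" "V \<noteq> {}" for V
    using open_enlarge[OF assms(2) that] by simp
qed

end

theorem lemma2p1:
  fixes K :: "'k set" and Xk :: "'k \<Rightarrow> 'a set" and lek :: "'k \<Rightarrow> 'a \<Rightarrow> 'a \<Rightarrow> bool"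
  assumes posets: "\<And>k. k \<in> K \<Longrightarrow> poset_on (Xk k) (lek k)"
    and nonempty: "\<And>k. k \<in> K \<Longrightarrow> Xk k \<noteq> {}"
    and disjoint: "\<And>k l. k \<in> K \<Longrightarrow> l \<in> K \<Longrightarrow> k \<noteq> l \<Longrightarrow> Xk k \<inter> Xk l = {}"
  shows "(\<forall>k\<in>K. compact_space (interval_topology (Xk k) (lek k)))
     \<longleftrightarrow> compact_space (interval_topology (\<Union>k\<in>K. Xk k)
            (\<lambda>x y. \<exists>k\<in>K. x \<in> Xk k \<and> y \<in> Xk k \<and> lek k x y))"
proof -
  interpret disjoint_family K Xk lek
    using disjoint by unfold_locales
  have order_eq: "(\<lambda>x y. \<exists>k\<in>K. x \<in> Xk k \<and> y \<in> Xk k \<and> lek k x y) = union_le"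
    by (simp add: fun_eq_iff union_le_def)
  have carrier_eq: "(\<Union>k\<in>K. Xk k) = union_set"
    by (simp add: union_set_def)
  show ?thesis
    unfolding order_eq carrier_eq
    using compact_union_if_compact_components compact_component_if_compact_union by blast
qed

end
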